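(* Let $n\ge 2$ and let $\dot{\mathbf x}=\mathbf f(\sigma,\mathbf x)$ be a multistable regulatory system (MSRS) as defined in the context, with $f_k(\sigma,\mathbf x)=-l(x_k)+\sigma\frac{g(x_k)}{P(x_1,\dots,x_n)+h(x_k)}$; fix $\sigma>0$. Let $\mathbf r=(q,\dots,q)\in\mathbb R_{>0}^n$ be an equilibrium (a diagonal equilibrium). Put $D_n(\mathbf x)=-\frac{P(\mathbf x)+h(x_n)}{l(x_n)}$, $$\tau=\frac{\partial f_n}{\partial x_n}(\mathbf r),\qquad \xi=\frac{\frac{\partial P}{\partial x_{n-1}}(\mathbf r)}{D_n(\mathbf r)},\qquad G_1=\tau-\xi,\qquad G_2=\tau+(n-1)\xi .$$ Then $\det\left(\lambda I-J_{\mathbf f}(\mathbf r)\right)=(\lambda-G_1)^{n-1}(\lambda-G_2)$, where $J_{\mathbf f}=\left[\frac{\partial f_i}{\partial x_j}\right]_{i,j=1}^n$ is the Jacobian matrix with respect to $\mathbf x$.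
   Context: A system of ODEs $\frac{dx_k}{dt}=f_k(\sigma,x_1,\dots,x_n)$, $k=1,\dots,n$, is called a multistable regulatory system (MSRS) if $f_k(\sigma,x_1,\dots,x_n)=-l(x_k)+\sigma\frac{g(x_k)}{P(x_1,\dots,x_n)+h(x_k)}$, where $l,g,h$ are real functions of one real variable and $P$ is a real function of $n$ real variables (all differentiable), and: (1) $\sigma$ is a positive parameter; (2) $P$ is symmetric, i.e. unchanged under interchanging any two of its arguments; (3) for every $k$ and every $(x_1,\dots,x_n)\in\mathbb R_{>0}^n$, $P(x_1,\dots,x_n)+h(x_k)>0$; (4) $l(z)\neq 0$ and for every $\sigma>0$ the function $z\mapsto \sigma\frac{g(z)}{l(z)}-h(z)$ has at most one extreme point for $z\in\mathbb R_{>0}$. For a given $\sigma$, a point $\mathbf r\in\mathbb R_{>0}^n$ is an equilibrium if $f_1(\sigma,\mathbf r)=\dots=f_n(\sigma,\mathbf r)=0$. *)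

theory Defs
  imports "HOL-Analysis.Analysis"
begin

definition partial :: "(real^'n \<Rightarrow> real) \<Rightarrow> 'n \<Rightarrow> real^'n \<Rightarrow> real" where
  "partial F j x = deriv (\<lambda>t. F (\<chi> k. if k = j then t else x $ k)) (x $ j)"

definition msrs_f :: "(real \<Rightarrow> real) \<Rightarrow> (real \<Rightarrow> real) \<Rightarrow> (real \<Rightarrow> real) \<Rightarrow>
    (real^'n \<Rightarrow> real) \<Rightarrow> real \<Rightarrow> 'n \<Rightarrow> real^'n \<Rightarrow> real" where
  "msrs_f l g h P \<sigma> k x = - l (x $ k) + \<sigma> * (g (x $ k) / (P x + h (x $ k)))"

definition msrs_jacobian :: "(real \<Rightarrow> real) \<Rightarrow> (real \<Rightarrow> real) \<Rightarrow> (real \<Rightarrow> real) \<Rightarrow>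
    (real^'n \<Rightarrow> real) \<Rightarrow> real \<Rightarrow> real^'n \<Rightarrow> real^'n^'n" where
  "msrs_jacobian l g h P \<sigma> x = (\<chi> i j. partial (msrs_f l g h P \<sigma> i) j x)"

definition positive_vec :: "real^'n \<Rightarrow> bool" where
  "positive_vec x \<longleftrightarrow> (\<forall>k. x $ k > 0)"

definition symmetric_fun :: "(real^'n \<Rightarrow> real) \<Rightarrow> bool" where
  "symmetric_fun P \<longleftrightarrow> (\<forall>x i j.
     P (\<chi> k. if k = i then x $ j else if k = j then x $ i else x $ k) = P x)"

definition extreme_point_on :: "real set \<Rightarrow> (real \<Rightarrow> real) \<Rightarrow> real \<Rightarrow> bool" where
  "extreme_point_on S \<phi> z \<longleftrightarrow> z \<in> S \<and> (\<exists>e>0.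
     (\<forall>y\<in>S. \<bar>y - z\<bar> < e \<longrightarrow> \<phi> y \<le> \<phi> z) \<or> (\<forall>y\<in>S. \<bar>y - z\<bar> < e \<longrightarrow> \<phi> z \<le> \<phi> y))"

text \<open>Multistable regulatory system (conditions (2)-(4) and differentiability;
  condition (1), \<sigma> > 0, is stated separately).\<close>
definition MSRS :: "(real \<Rightarrow> real) \<Rightarrow> (real \<Rightarrow> real) \<Rightarrow> (real \<Rightarrow> real) \<Rightarrow>
    (real^'n \<Rightarrow> real) \<Rightarrow> bool" where
  "MSRS l g h P \<longleftrightarrow>
     (\<forall>z. l differentiable at z) \<and> (\<forall>z. g differentiable at z) \<and>
     (\<forall>z. h differentiable at z) \<and> (\<forall>x. P differentiable at x) \<and>
     symmetric_fun P \<and>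
     (\<forall>k x. positive_vec x \<longrightarrow> P x + h (x $ k) > 0) \<and>
     (\<forall>z>0. l z \<noteq> 0) \<and>
     (\<forall>\<sigma>>0. \<forall>z1 z2.
        extreme_point_on {0<..} (\<lambda>z. \<sigma> * (g z / l z) - h z) z1 \<and>
        extreme_point_on {0<..} (\<lambda>z. \<sigma> * (g z / l z) - h z) z2 \<longrightarrow> z1 = z2)"

definition equilibrium :: "(real \<Rightarrow> real) \<Rightarrow> (real \<Rightarrow> real) \<Rightarrow> (real \<Rightarrow> real) \<Rightarrow>
    (real^'n \<Rightarrow> real) \<Rightarrow> real \<Rightarrow> real^'n \<Rightarrow> bool" where
  "equilibrium l g h P \<sigma> r \<longleftrightarrow> positive_vec r \<and> (\<forall>k. msrs_f l g h P \<sigma> k r = 0)"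

end

theory Submission
  imports Defs
begin

text \<open>At a diagonal equilibrium \<open>r = (q,\<dots>,q)\<close> the symmetry of \<open>P\<close> makes all diagonal entries
  of the Jacobian equal to \<open>\<tau>\<close> and all off-diagonal entries equal to
  \<open>-\<sigma> g(q) \<partial>P/\<partial>x\<^sub>j(r) / (P(r) + h(q))\<^sup>2\<close>, which the equilibrium equation
  \<open>\<sigma> g(q) = l(q) (P(r) + h(q))\<close> turns into \<open>\<xi>\<close>. Hence \<open>\<lambda>I - J = (\<lambda> - \<tau> + \<xi>) I - \<xi> \<one>\<one>\<^sup>T\<close>.
  Subtracting one row from all others and adding all other columns to that column
  leaves a matrix that is diagonal outside that row, with diagonal
  \<open>\<lambda> - \<tau> + \<xi>\<close> (n - 1 times) and \<open>\<lambda> - \<tau> - (n - 1) \<xi>\<close>.\<close>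

lemma det_diagonal_except_row:
  fixes A :: "'a::comm_ring_1^'n^'n"
  assumes offdiag: "\<And>i j. i \<noteq> p \<Longrightarrow> i \<noteq> j \<Longrightarrow> A$i$j = 0"
  shows "det A = prod (\<lambda>i. A$i$i) UNIV"
proof -
  let ?perms = "{\<pi>. \<pi> permutes (UNIV :: 'n set)}"
  have vanish: "\<forall>\<pi> \<in> ?perms - {id}. of_int (sign \<pi>) * prod (\<lambda>i. A$i$\<pi> i) UNIV = 0"
  proof
    fix \<pi> assume "\<pi> \<in> ?perms - {id}"
    then have "inj \<pi>" and "\<pi> \<noteq> id" by (auto intro: permutes_inj)
    have "\<exists>i. i \<noteq> p \<and> \<pi> i \<noteq> i"
    proof (rule ccontr)
      assume "\<not> ?thesis"
      then have fixes_others: "\<pi> i = i" if "i \<noteq> p" for i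
        using that by blast
      with \<open>\<pi> \<noteq> id\<close> have "\<pi> p \<noteq> p" by (metis eq_id_iff)
      then have "\<pi> (\<pi> p) = \<pi> p" by (rule fixes_others)
      with \<open>inj \<pi>\<close> have "\<pi> p = p" by (rule injD)
      with \<open>\<pi> p \<noteq> p\<close> show False ..
    qed
    then show "of_int (sign \<pi>) * prod (\<lambda>i. A$i$\<pi> i) UNIV = 0"
      using offdiag by (metis (mono_tags) UNIV_I finite prod_zero mult_zero_right)
  qed
  have "{id} \<subseteq> ?perms" by (simp add: permutes_id)
  from sum.mono_neutral_cong_left[OF finite_permutations[OF finite] this vanish] show ?thesis
    unfolding det_def by (simp add: sign_id)
qed

lemma matrix_mult_subtract_row:
  fixes A :: "'a::comm_ring_1^'n^'m"
  shows "((\<chi> i j. if i = j then 1 else if j = p then -1 else 0) ** A) $ i $ k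
    = (if i = p then A$p$k else A$i$k - A$p$k)"
proof -
  have "(\<chi> i j. if i = j then 1 else if j = p then -1 else 0 :: 'a^'m^'m) $ i $ j * A$j$k
    = (if j = i then A$i$k else 0) - (if i = p then 0 else if j = p then A$p$k else 0)" for j
    by auto
  then show ?thesis
    unfolding matrix_matrix_mult_def by (simp add: sum_subtractf)
qed

lemma matrix_mult_sum_columns:
  fixes A :: "'a::comm_ring_1^'n^'m"
  shows "(A ** (\<chi> i j. if i = j \<or> j = p then 1 else 0)) $ i $ j
    = (if j = p then (\<Sum>k\<in>UNIV. A$i$k) else A$i$j)"
  unfolding matrix_matrix_mult_def by (auto simp: if_distrib cong: if_cong)

lemma det_mat_minus_const:
  "det (mat a - (\<chi> i j. b) :: 'a::comm_ring_1^'n^'n) = a ^ (CARD('n) - 1) * (a - of_nat CARD('n) * b)"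
proof -
  fix p :: 'n
  define V :: "'a^'n^'n" where "V = (\<chi> i j. if i = j then 1 else if j = p then -1 else 0)"
  define U :: "'a^'n^'n" where "U = (\<chi> i j. if i = j \<or> j = p then 1 else 0)"
  let ?M = "mat a - (\<chi> i j. b) :: 'a^'n^'n"
  have "det V = 1" "det U = 1"
    by (subst det_transpose[symmetric], subst det_diagonal_except_row[where p=p],
        auto simp: V_def U_def transpose_def)+
  have VMU: "(V ** ?M ** U) $ i $ j = (if i = p then (if j = p then a - of_nat CARD('n) * b else - b)
      else if i = j then a else 0)" for i j
    unfolding U_def matrix_mult_sum_columns unfolding V_def matrix_mult_subtract_row
    by (auto simp: mat_def sum_subtractf)
  have "det V * det ?M * det U = det (V ** ?M ** U)"
    by (simp only: det_mul)
  also have "\<dots> = (\<Prod>i\<in>UNIV. (V ** ?M ** U) $ i $ i)"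
    by (rule det_diagonal_except_row[where p=p]) (simp add: VMU)
  also have "\<dots> = (a - of_nat CARD('n) * b) * a ^ (CARD('n) - 1)"
    by (simp add: VMU prod.remove[of UNIV p] card_Diff_singleton)
  finally show ?thesis using \<open>det V = 1\<close> \<open>det U = 1\<close> by (simp add: mult.commute)
qed

lemma coordinate_line_differentiable:
  "(\<lambda>t. (\<chi> k. if k = j then t else x $ k) :: real^'n) differentiable at t0"
proof -
  have "(\<lambda>t. (\<chi> k. if k = j then t else x $ k) :: real^'n)
      = (\<lambda>t. x + (t - x $ j) *\<^sub>R axis j 1)"
    by (auto simp: vec_eq_iff axis_def)
  then show ?thesis by simp
qed

lemma has_real_derivative_partial:
  assumes "F differentiable at x"
  shows "((\<lambda>t. F (\<chi> k. if k = j then t else x $ k)) has_real_derivative partial F j x) (at (x $ j))"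
proof -
  have "(\<chi> k. if k = j then x $ j else x $ k) = x" by (simp add: vec_eq_iff)
  then have "(F \<circ> (\<lambda>t. \<chi> k. if k = j then t else x $ k)) differentiable at (x $ j)"
    using assms by (intro differentiable_chain_at coordinate_line_differentiable) simp_all
  then show ?thesis
    unfolding partial_def by (simp add: o_def DERIV_deriv_iff_real_differentiable)
qed

lemma symmetric_fun_single_coordinate:
  fixes P :: "real^'n \<Rightarrow> real"
  assumes "symmetric_fun P"
  shows "P (\<chi> k. if k = i then t else q) = P (\<chi> k. if k = j then t else q)"
proof -
  let ?x = "(\<chi> k. if k = j then t else q) :: real^'n"
  have "P (\<chi> k. if k = i then ?x $ j else if k = j then ?x $ i else ?x $ k) = P ?x"
    using assms unfolding symmetric_fun_def by blast
  moreover have "(\<chi> k. if k = i then ?x $ j else if k = j then ?x $ i else ?x $ k)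
      = (\<chi> k. if k = i then t else q)"
    by (auto simp: vec_eq_iff)
  ultimately show ?thesis by simp
qed

lemma partial_const_vec:
  "partial F j (\<chi> k. q) = deriv (\<lambda>t. F (\<chi> k. if k = j then t else q)) q"
  unfolding partial_def by (simp only: vec_lambda_beta)

lemma partial_symmetric_fun_const_vec:
  assumes "symmetric_fun P"
  shows "partial P i (\<chi> k. q) = partial P j (\<chi> k. q)"
  unfolding partial_const_vec symmetric_fun_single_coordinate[OF assms, of i _ _ j] ..

lemma partial_msrs_f_diagonal_const_vec:
  assumes "symmetric_fun P"
  shows "partial (msrs_f l g h P \<sigma> i) i (\<chi> k. q) = partial (msrs_f l g h P \<sigma> j) j (\<chi> k. q)"
  unfolding partial_const_vec msrs_f_def
  by (simp add: symmetric_fun_single_coordinate[OF assms, of i _ _ j])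

lemma partial_msrs_f_off_diagonal_const_vec:
  assumes "P differentiable at (\<chi> k. q)" and "i \<noteq> j" and "P (\<chi> k. q) + h q \<noteq> 0"
  shows "partial (msrs_f l g h P \<sigma> i) j (\<chi> k. q)
    = - \<sigma> * g q * partial P j (\<chi> k. q) / (P (\<chi> k. q) + h q)\<^sup>2"
proof -
  have line_deriv:
      "((\<lambda>t. P (\<chi> k. if k = j then t else q)) has_real_derivative partial P j (\<chi> k. q)) (at q)"
    using has_real_derivative_partial[OF assms(1), of j] by (simp only: vec_lambda_beta)
  have "((\<lambda>t. - l q + \<sigma> * (g q / (P (\<chi> k. if k = j then t else q) + h q))) has_real_derivative
      - \<sigma> * g q * partial P j (\<chi> k. q) / (P (\<chi> k. q) + h q)\<^sup>2) (at q)"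
    by (rule derivative_eq_intros line_deriv refl)+ (simp_all add: assms(3), simp add: power2_eq_square)
  moreover have "msrs_f l g h P \<sigma> i (\<chi> k. if k = j then t else q)
      = - l q + \<sigma> * (g q / (P (\<chi> k. if k = j then t else q) + h q))" for t
    using assms(2) by (simp add: msrs_f_def)
  ultimately show ?thesis
    unfolding partial_const_vec by (simp add: DERIV_imp_deriv)
qed

lemma msrs_jacobian_at_diagonal_equilibrium:
  fixes P :: "real^'n \<Rightarrow> real"
  assumes msrs: "MSRS l g h P" and eq: "equilibrium l g h P \<sigma> (\<chi> k. q)"
  shows "msrs_jacobian l g h P \<sigma> (\<chi> k. q) = (\<chi> i j. if i = j
      then partial (msrs_f l g h P \<sigma> nn) nn (\<chi> k. q)
      else partial P nm (\<chi> k. q) / (- (P (\<chi> k. q) + h q) / l q))"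
proof -
  let ?r = "(\<chi> k. q) :: real^'n"
  define S where "S = P ?r + h q"
  have sym: "symmetric_fun P" and diff: "P differentiable at ?r"
    using msrs by (simp_all add: MSRS_def)
  have "q > 0" using eq by (simp add: equilibrium_def positive_vec_def)
  then have "l q \<noteq> 0" using msrs by (simp add: MSRS_def)
  have "S > 0"
    using msrs eq unfolding S_def MSRS_def equilibrium_def by (metis vec_lambda_beta)
  moreover have "\<sigma> * (g q / S) = l q"
    using eq by (simp add: S_def equilibrium_def msrs_f_def)
  ultimately have balance: "\<sigma> * g q = l q * S"
    by (simp add: field_simps)
  have "partial (msrs_f l g h P \<sigma> i) j ?r = partial P nm ?r / (- S / l q)" if "i \<noteq> j" for i j
  proof -
    have "partial (msrs_f l g h P \<sigma> i) j ?r = - (\<sigma> * g q) * partial P nm ?r / S\<^sup>2"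
      using partial_msrs_f_off_diagonal_const_vec[OF diff that, of h l g \<sigma>]
        partial_symmetric_fun_const_vec[OF sym, of j _ nm] \<open>S > 0\<close>
      by (simp add: S_def)
    also have "\<dots> = partial P nm ?r / (- S / l q)"
      unfolding balance using \<open>S > 0\<close> \<open>l q \<noteq> 0\<close> by (simp add: power2_eq_square field_simps)
    finally show ?thesis .
  qed
  moreover have "partial (msrs_f l g h P \<sigma> i) i ?r = partial (msrs_f l g h P \<sigma> nn) nn ?r" for i
    using partial_msrs_f_diagonal_const_vec[OF sym] .
  ultimately show ?thesis
    unfolding msrs_jacobian_def S_def vec_eq_iff by simp
qed

theorem theorem3:
  fixes l g h :: "real \<Rightarrow> real" and P :: "real^'n \<Rightarrow> real"
    and \<sigma> q lam :: real and nn nm :: 'n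
  assumes "CARD('n) \<ge> 2"
    and "MSRS l g h P"
    and "\<sigma> > 0"
    and "nn \<noteq> nm"
    and "equilibrium l g h P \<sigma> (\<chi> k. q)"
  shows "let r = (\<chi> k. q) :: real^'n;
             \<tau> = partial (msrs_f l g h P \<sigma> nn) nn r;
             D = - (P r + h (r $ nn)) / l (r $ nn);
             \<xi> = partial P nm r / D;
             G1 = \<tau> - \<xi>;
             G2 = \<tau> + real (CARD('n) - 1) * \<xi>
         in det (mat lam - msrs_jacobian l g h P \<sigma> r)
            = (lam - G1) ^ (CARD('n) - 1) * (lam - G2)"
proof -
  let ?r = "(\<chi> k. q) :: real^'n"
  define \<tau> where "\<tau> = partial (msrs_f l g h P \<sigma> nn) nn ?r"
  define \<xi> where "\<xi> = partial P nm ?r / (- (P ?r + h q) / l q)"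
  have "mat lam - msrs_jacobian l g h P \<sigma> ?r = mat (lam - \<tau> + \<xi>) - (\<chi> i j. \<xi>)"
    unfolding msrs_jacobian_at_diagonal_equilibrium[OF assms(2,5), of nn nm] \<tau>_def \<xi>_def
    by (auto simp: vec_eq_iff mat_def)
  then have "det (mat lam - msrs_jacobian l g h P \<sigma> ?r)
      = (lam - \<tau> + \<xi>) ^ (CARD('n) - 1) * (lam - \<tau> + \<xi> - real CARD('n) * \<xi>)"
    by (simp only: det_mat_minus_const)
  also have "\<dots> = (lam - (\<tau> - \<xi>)) ^ (CARD('n) - 1) * (lam - (\<tau> + real (CARD('n) - 1) * \<xi>))"
    by (simp add: of_nat_diff algebra_simps)
  finally show ?thesis
    unfolding Let_def vec_lambda_beta \<tau>_def[symmetric] \<xi>_def[symmetric] .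
qed

end
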